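(* Let $w\in\Sigma^n$ and, for each letter $q\in\Sigma$, let $i_q$ be the leftmost position of $w$ with $w[i_q]=q$. Then distinct paths $(v_{p_1},\dots,v_{p_j})$ of the same length $j$ in $\mathrm{NEG}(w)$, each starting at some vertex $v_{i_q}$, correspond to distinct subsequences $w[p_1]\cdots w[p_j]$ of $w$; i.e., every such path corresponds to a unique subsequence of $w$.
   Context: Words are finite sequences over $\Sigma=\{1,\dots,\sigma\}$ with the usual order, $\Sigma$ being the set of letters of $w$. $P_w[i,x]$ denotes the largest $i'\le i$ with $w[i']=x$. The next element graph $\mathrm{NEG}(w)$ is the directed, edge-labelled graph with vertices $v_1,\dots,v_n$ whose edges are pairs $(v_i,v_j)$ with $i<j$ carrying a label: $\uparrow$ if $w[i]<w[j]$ and for all $j'\in[i+1,j-1]$, $w[i]>w[j']$ or $w[j']>w[j]$; $\rightarrow$ if $w[i]=w[j]$ and $i=P_w[j-1,w[j]]$; $\downarrow$ if $w[i]>w[j]$ and for all $j'\in[i+1,j-1]$, $w[i]<w[j']$ or $w[j']<w[j]$. A path $(v_{p_1},\dots,v_{p_j})$ corresponds to the subsequence $w[p_1]\cdots w[p_j]$. *)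

theory Defs
  imports Main
begin

(* Words are lists of naturals; positions are 0-indexed: vertex v_{i+1} of the
   paper is position i here. *)

datatype neg_label = Up | Right | Down

definition P_w :: "nat list \<Rightarrow> nat \<Rightarrow> nat \<Rightarrow> nat" where
  "P_w w i x = (GREATEST i'. i' \<le> i \<and> w ! i' = x)"

definition neg_edge_lab :: "nat list \<Rightarrow> nat \<Rightarrow> nat \<Rightarrow> neg_label \<Rightarrow> bool" where
  "neg_edge_lab w i j l \<longleftrightarrow> i < j \<and> j < length w \<and>
     (case l of
        Up \<Rightarrow> w ! i < w ! j \<and>
              (\<forall>j'. i < j' \<and> j' < j \<longrightarrow> w ! i > w ! j' \<or> w ! j' > w ! j)
      | Right \<Rightarrow> w ! i = w ! j \<and> i = P_w w (j - 1) (w ! j)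
      | Down \<Rightarrow> w ! i > w ! j \<and>
              (\<forall>j'. i < j' \<and> j' < j \<longrightarrow> w ! i < w ! j' \<or> w ! j' < w ! j))"

definition neg_edge :: "nat list \<Rightarrow> nat \<Rightarrow> nat \<Rightarrow> bool" where
  "neg_edge w i j \<longleftrightarrow> (\<exists>l. neg_edge_lab w i j l)"

definition neg_path :: "nat list \<Rightarrow> nat list \<Rightarrow> bool" where
  "neg_path w ps \<longleftrightarrow> ps \<noteq> [] \<and> (\<forall>p\<in>set ps. p < length w) \<and>
     (\<forall>k. Suc k < length ps \<longrightarrow> neg_edge w (ps ! k) (ps ! Suc k))"

definition first_occ :: "nat list \<Rightarrow> nat \<Rightarrow> bool" where
  "first_occ w i \<longleftrightarrow> i < length w \<and> (\<forall>i'<i. w ! i' \<noteq> w ! i)"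

definition path_word :: "nat list \<Rightarrow> nat list \<Rightarrow> nat list" where
  "path_word w ps = map (\<lambda>p. w ! p) ps"

end

theory Submission
  imports Defs
begin

text \<open>From a fixed vertex the label of an outgoing edge is forced by comparing the two letters,
  and for a fixed label the side conditions forbid a second target carrying the same letter
  further to the right. So a vertex has at most one out-neighbour per letter, and a path is
  reconstructed from its start and its word; two starts at leftmost occurrences with the same
  letter coincide.\<close>

lemma P_w_ge:
  assumes "j \<le> k" "w ! j = x"
  shows "j \<le> P_w w k x"
  unfolding P_w_def by (rule Greatest_le_nat[where b = k]) (use assms in auto)

lemma neg_edge_lab_label_unique:
  assumes "neg_edge_lab w i j l" "neg_edge_lab w i j' l'" "w ! j = w ! j'"
  shows "l = l'"
  using assms unfolding neg_edge_lab_def by (cases l; cases l') auto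

lemma neg_edge_lab_no_later_target:
  assumes edge: "neg_edge_lab w i j l" and edge': "neg_edge_lab w i j' l"
    and same_letter: "w ! j = w ! j'" and "j < j'"
  shows False
proof -
  have "i < j" using edge unfolding neg_edge_lab_def by simp
  show False
  proof (cases l)
    case Up
    then show False using edge edge' same_letter \<open>i < j\<close> \<open>j < j'\<close>
      unfolding neg_edge_lab_def by force
  next
    case Down
    then show False using edge edge' same_letter \<open>i < j\<close> \<open>j < j'\<close>
      unfolding neg_edge_lab_def by force
  next
    case Right
    then have "i = P_w w (j' - 1) (w ! j')" using edge' unfolding neg_edge_lab_def by simp
    moreover have "j \<le> P_w w (j' - 1) (w ! j')"
      using P_w_ge \<open>j < j'\<close> same_letter by simp
    ultimately show False using \<open>i < j\<close> by simp
  qed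
qed

lemma neg_edge_target_unique:
  assumes "neg_edge w i j" "neg_edge w i j'" "w ! j = w ! j'"
  shows "j = j'"
proof -
  obtain l l' where edge: "neg_edge_lab w i j l" and edge': "neg_edge_lab w i j' l'"
    using assms(1,2) unfolding neg_edge_def by blast
  from edge edge' assms(3) have "l = l'" by (rule neg_edge_lab_label_unique)
  with edge edge' assms(3) show "j = j'"
    by (metis linorder_neqE_nat neg_edge_lab_no_later_target)
qed

lemma first_occ_unique:
  assumes "first_occ w i" "first_occ w j" "w ! i = w ! j"
  shows "i = j"
  using assms unfolding first_occ_def by (metis linorder_neqE_nat)

lemma neg_path_eq_if_hd_eq_path_word_eq:
  assumes ps: "neg_path w ps" and qs: "neg_path w qs"
    and hd_eq: "hd ps = hd qs" and word_eq: "path_word w ps = path_word w qs"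
  shows "ps = qs"
proof -
  have len: "length ps = length qs"
    using word_eq unfolding path_word_def by (metis length_map)
  have letter_eq: "w ! (ps ! k) = w ! (qs ! k)" if "k < length ps" for k
    using word_eq len that unfolding path_word_def by (metis nth_map)
  have "ps ! k = qs ! k" if "k < length ps" for k
    using that
  proof (induction k)
    case 0
    then show ?case using hd_eq ps qs unfolding neg_path_def by (simp add: hd_conv_nth)
  next
    case (Suc k)
    then have "ps ! k = qs ! k" by simp
    then have "neg_edge w (ps ! k) (ps ! Suc k)" "neg_edge w (ps ! k) (qs ! Suc k)"
      using ps qs len Suc.prems unfolding neg_path_def by auto
    then show ?case using neg_edge_target_unique letter_eq[OF Suc.prems] by blast
  qed
  with len show "ps = qs" by (rule nth_equalityI)
qed

theorem lemma18:
  fixes w :: "nat list" and \<sigma> :: nat and ps qs :: "nat list"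
  assumes "set w = {1..\<sigma>}"
    and "neg_path w ps" and "neg_path w qs"
    and "length ps = length qs"
    and "first_occ w (hd ps)" and "first_occ w (hd qs)"
    and "ps \<noteq> qs"
  shows "path_word w ps \<noteq> path_word w qs"
proof
  assume word_eq: "path_word w ps = path_word w qs"
  have "ps \<noteq> []" "qs \<noteq> []" using assms(2,3) unfolding neg_path_def by auto
  with word_eq have "w ! hd ps = w ! hd qs"
    unfolding path_word_def by (metis hd_map)
  with assms(5,6) have "hd ps = hd qs" by (rule first_occ_unique)
  from assms(2,3) this word_eq have "ps = qs" by (rule neg_path_eq_if_hd_eq_path_word_eq)
  with assms(7) show False by contradiction
qed

end
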